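(* Let $\overline{\mathcal{O}}$, $\varphi$ be as in the context, let $K$ be a complete non-Archimedean field, and let $F:\overline{\mathcal{O}}\to K$ be a continuous non-vanishing function. Suppose that for all $n\in\mathbb{N}$ and all $\mathbf{x}=(\mathbf{x}_t)_t\in\overline{\mathcal{O}}$ with $|\mathbf{x}_t|<1$ for all $t$, $$\varphi^{(n)}(\mathbf{x})=\mathbf{x}\ \Longrightarrow\ \prod_{j=0}^{n-1}F\left(\varphi^{(j)}(\mathbf{x})\right)=1.$$ Then there exists a continuous non-vanishing function $G:\overline{\mathcal{O}}\to K$ such that $F(\mathbf{x})=\dfrac{G(\mathbf{x})}{G(\varphi(\mathbf{x}))}$ for all $\mathbf{x}\in\overline{\mathcal{O}}$.
   Context: Let $q$ be a prime power, $A=\mathbb{F}_q[\theta]$, $k=\mathbb{F}_q(\theta)$. Let $\mathcal{O}=\prod_t\mathcal{O}_t$ be a finite product with each $\mathcal{O}_t\in\{\mathbb{Z},A\}$; for each $t$ fix a prime number $p_t$ (if $\mathcal{O}_t=\mathbb{Z}$, with $\overline{\mathcal{O}}_t=\mathbb{Z}_{p_t}$) or a monic irreducible $v_t\in A$ (if $\mathcal{O}_t=A$, with $\overline{\mathcal{O}}_t=A_{v_t}$ the $v_t$-adic completion), and $\overline{\mathcal{O}}=\prod_t\overline{\mathcal{O}}_t$. Fix $\pi_t$ a positive power of $p_t$ resp. $v_t$. Each $\mathbf{x}_t\in\overline{\mathcal{O}}_t$ is uniquely $\sum_{i\ge0}x_{t,i}\pi_t^i$ with integer digits $0\le x_{t,i}<\pi_t$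 (case $\mathbb{Z}$) or polynomial digits of degree $<\deg\pi_t$ (case $A$); $\varphi_t(\mathbf{x}_t)=\sum_{i\ge0}x_{t,i+1}\pi_t^i$ and $\varphi(\mathbf{x})=(\varphi_t(\mathbf{x}_t))_t$; $\varphi^{(j)}$ is the $j$-fold iterate. If $\varphi^{(n)}(\mathbf{x})=\mathbf{x}$ then each component $\mathbf{x}_t$ is an element of $\mathbb{Q}$ resp. $k$ (a ratio of an element of $\mathcal{O}_t$ and $1-\pi_t^n$); here $|\cdot|$ denotes the usual real absolute value on $\mathbb{Q}$ and the $\infty$-adic absolute value $|f/g|=q^{\deg f-\deg g}$ on $k$. *)

theory Defs
  imports "HOL-Computational_Algebra.Computational_Algebra"
begin

text \<open>Points of Obar = prod_t Obar_t, via their pi_t-adic digit expansions.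
  There are m components of type Z (indices t < m) and l components of type A = F_q[theta]
  (indices t < l), where F_q is the finite field type 'f.  A point is a pair (xz, xa):
  xz t i is the i-th digit of the t-th Z-component, xa t i the i-th digit of the t-th
  A-component.  Digits at indices outside the range are fixed to 0.\<close>

type_synonym 'f pt = "(nat \<Rightarrow> nat \<Rightarrow> int) \<times> (nat \<Rightarrow> nat \<Rightarrow> 'f poly)"

definition Obar :: "nat \<Rightarrow> nat \<Rightarrow> (nat \<Rightarrow> int) \<Rightarrow> (nat \<Rightarrow> 'f::field poly) \<Rightarrow> 'f pt set" where
  "Obar m l piZ piA = {(xz, xa).
      (\<forall>t i. t < m \<longrightarrow> 0 \<le> xz t i \<and> xz t i < piZ t) \<and>
      (\<forall>t i. m \<le> t \<longrightarrow> xz t i = 0) \<and>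
      (\<forall>t i. t < l \<longrightarrow> degree (xa t i) < degree (piA t)) \<and>
      (\<forall>t i. l \<le> t \<longrightarrow> xa t i = 0)}"

definition phi :: "'f pt \<Rightarrow> 'f pt" where
  "phi x = (\<lambda>t i. fst x t (Suc i), \<lambda>t i. snd x t (Suc i))"

text \<open>Two points agree in their first D digits in every component
  (i.e. lie in the same ball of radius |pi_t|^D in each component).\<close>
definition agree :: "nat \<Rightarrow> 'f pt \<Rightarrow> 'f pt \<Rightarrow> bool" where
  "agree D x y \<longleftrightarrow> (\<forall>t i. i < D \<longrightarrow> fst x t i = fst y t i \<and> snd x t i = snd y t i)"

definition nonarch_abs :: "('k::field \<Rightarrow> real) \<Rightarrow> bool" where
  "nonarch_abs N \<longleftrightarrow>
     (\<forall>x. 0 \<le> N x) \<and> (\<forall>x. N x = 0 \<longleftrightarrow> x = 0) \<and>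
     (\<forall>x y. N (x * y) = N x * N y) \<and> (\<forall>x y. N (x + y) \<le> max (N x) (N y))"

definition abs_complete :: "('k::field \<Rightarrow> real) \<Rightarrow> bool" where
  "abs_complete N \<longleftrightarrow>
     (\<forall>X::nat \<Rightarrow> 'k. (\<forall>e>0. \<exists>M. \<forall>a\<ge>M. \<forall>b\<ge>M. N (X a - X b) < e) \<longrightarrow>
        (\<exists>L. \<forall>e>0. \<exists>M. \<forall>a\<ge>M. N (X a - L) < e))"

text \<open>Continuity of F : Obar -> K (product of the pi_t-adic topologies on Obar,
  topology of the absolute value N on K).\<close>
definition cont_Obar :: "nat \<Rightarrow> nat \<Rightarrow> (nat \<Rightarrow> int) \<Rightarrow> (nat \<Rightarrow> 'f::field poly) \<Rightarrow>
    ('k::field \<Rightarrow> real) \<Rightarrow> ('f pt \<Rightarrow> 'k) \<Rightarrow> bool" where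
  "cont_Obar m l piZ piA N F \<longleftrightarrow>
     (\<forall>x\<in>Obar m l piZ piA. \<forall>e>0. \<exists>D. \<forall>y\<in>Obar m l piZ piA. agree D x y \<longrightarrow> N (F y - F x) < e)"

text \<open>If phi^n(x) = x with n \<ge> 1, the Z-component x_t equals a/(1 - pi^n) in Q with
  a = sum_{i<n} x_{t,i} pi^i.\<close>
definition valZ :: "int \<Rightarrow> nat \<Rightarrow> (nat \<Rightarrow> int) \<Rightarrow> rat" where
  "valZ p n d = of_int (\<Sum>i<n. d i * p ^ i) / of_int (1 - p ^ n)"

text \<open>The infinity-adic absolute value |f/g| = q^(deg f - deg g) on k = F_q(theta),
  for g \<noteq> 0 (and |0| = 0), with q = card of UNIV of type 'f.\<close>
definition abs_inf :: "'f::{finite,field} poly \<Rightarrow> 'f poly \<Rightarrow> real" where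
  "abs_inf f g = (if f = 0 then 0
      else real (card (UNIV :: 'f set)) powr (real (degree f) - real (degree g)))"

text \<open>Absolute value of the A-component x_t = a/(1 - pi^n), a = sum_{i<n} x_{t,i} pi^i.\<close>
definition absA :: "'f::{finite,field} poly \<Rightarrow> nat \<Rightarrow> (nat \<Rightarrow> 'f poly) \<Rightarrow> real" where
  "absA p n d = abs_inf (\<Sum>i<n. d i * p ^ i) (1 - p ^ n)"

end

theory Submission
  imports Defs
begin

(* Since 0 is a fixed point of phi with |0| < 1, F(0) = 1, so the
   product H(x) = prod_{i >= 1} F(pi^i x) converges to a non-zero limit.  If x has only D
   digits, then for large K the point w whose digit string is 0^K x_0 ... x_(D-1) repeated is
   phi-periodic of period K + D with first digit 0, hence |w_t| < 1, and the phi-orbit of w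
   shadows pi^K x, ..., pi x, x, phi x, ..., phi^(D-1) x.  The hypothesis on periodic orbits
   thus gives H(x) * prod_{r<D} F(phi^r x) = 1 in the limit, whence F(x) H(x) = H(phi x);
   by continuity this holds everywhere, and G = 1/H.  All estimates are multiplicative:
   "a is e-close to b" means |a - b| < e |b|, which in a non-Archimedean field is, for
   e <= 1, an equivalence relation on the non-zero elements compatible with products and
   inverses. *)

locale nonarch_field =
  fixes N :: "'k::field \<Rightarrow> real"
  assumes nonarch: "nonarch_abs N"
begin

lemma N_nonneg: "0 \<le> N x"
  using nonarch unfolding nonarch_abs_def by blast

lemma N_eq_0_iff: "N x = 0 \<longleftrightarrow> x = 0"
  using nonarch unfolding nonarch_abs_def by blast

lemma N_mult: "N (x * y) = N x * N y"
  using nonarch unfolding nonarch_abs_def by blast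

lemma N_add_le_max: "N (x + y) \<le> max (N x) (N y)"
  using nonarch unfolding nonarch_abs_def by blast

lemma N_0 [simp]: "N 0 = 0"
  using N_eq_0_iff by simp

lemma N_pos: "x \<noteq> 0 \<Longrightarrow> 0 < N x"
  using N_eq_0_iff[of x] N_nonneg[of x] by linarith

lemma N_1: "N 1 = 1"
  using N_mult[of 1 1] N_pos[of 1] by simp

lemma N_minus: "N (- x) = N x"
proof -
  have "(N (-1) - 1) * (N (-1) + 1) = 0"
    using N_mult[of "-1" "-1"] N_1 by (simp add: algebra_simps)
  then have "N (-1) = 1"
    using N_nonneg[of "-1"] by simp
  then show ?thesis
    using N_mult[of "-1" x] by simp
qed

lemma N_diff_commute: "N (a - b) = N (b - a)"
  using N_minus[of "a - b"] by simp

lemma N_diff_triangle: "N (a - c) \<le> max (N (a - b)) (N (b - c))"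
  using N_add_le_max[of "a - b" "b - c"] by simp

lemma N_inverse: "N (inverse x) = inverse (N x)"
proof (cases "x = 0")
  case False
  then have "N (inverse x) * N x = 1"
    using N_mult[of "inverse x" x] N_1 by simp
  then show ?thesis
    by (metis inverse_unique mult.commute)
qed simp

lemma N_eq_if_close: "N (a - b) < N b \<Longrightarrow> N a = N b"
  using N_add_le_max[of "a - b" b] N_add_le_max[of "b - a" a] N_diff_commute[of a b]
  by (simp add: max_def split: if_splits)

definition rel_close :: "real \<Rightarrow> 'k \<Rightarrow> 'k \<Rightarrow> bool" where
  "rel_close e a b \<longleftrightarrow> N (a - b) < e * N b"

definition rel_tendsto :: "(nat \<Rightarrow> 'k) \<Rightarrow> 'k \<Rightarrow> bool" where
  "rel_tendsto X L \<longleftrightarrow> (\<forall>e>0. e \<le> 1 \<longrightarrow> eventually (\<lambda>n. rel_close e (X n) L) sequentially)"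

definition rel_cauchy :: "(nat \<Rightarrow> 'k) \<Rightarrow> bool" where
  "rel_cauchy X \<longleftrightarrow> (\<forall>e>0. e \<le> 1 \<longrightarrow> (\<exists>M. \<forall>a\<ge>M. \<forall>b\<ge>M. rel_close e (X a) (X b)))"

lemma rel_closeD:
  assumes "rel_close e a b" "e \<le> 1"
  shows "N a = N b" "b \<noteq> 0" "a \<noteq> 0"
proof -
  have close: "N (a - b) < e * N b"
    using assms(1) unfolding rel_close_def .
  then show "b \<noteq> 0"
    using N_nonneg[of "a - b"] by auto
  have "e * N b \<le> N b"
    using mult_right_mono[OF assms(2) N_nonneg[of b]] by simp
  then have "N (a - b) < N b"
    using close by linarith
  then show "N a = N b"
    by (rule N_eq_if_close)
  then show "a \<noteq> 0"
    using N_pos[OF \<open>b \<noteq> 0\<close>] by fastforce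
qed

lemma rel_close_refl: "0 < e \<Longrightarrow> b \<noteq> 0 \<Longrightarrow> rel_close e b b"
  unfolding rel_close_def using N_pos by simp

lemma rel_close_sym:
  assumes "rel_close e a b" "e \<le> 1"
  shows "rel_close e b a"
  using assms(1) rel_closeD(1)[OF assms] N_diff_commute[of a b] unfolding rel_close_def by simp

lemma rel_close_trans:
  "rel_close e a b \<Longrightarrow> rel_close e b c \<Longrightarrow> e \<le> 1 \<Longrightarrow> rel_close e a c"
  using rel_closeD(1)[of e b c] N_diff_triangle[of a c b] unfolding rel_close_def by auto

lemma rel_close_mult:
  assumes ab: "rel_close e a b" and cd: "rel_close e c d" and e: "e \<le> 1"
  shows "rel_close e (a * c) (b * d)"
proof -
  have "N b > 0" "N d > 0"
    using rel_closeD(2)[OF ab e] rel_closeD(2)[OF cd e] N_pos by auto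
  then have lt: "N b * N (c - d) < e * (N b * N d)" "N (a - b) * N d < e * (N b * N d)"
    using ab cd unfolding rel_close_def by (simp_all add: algebra_simps)
  have "N (a * c - b * d) = N (a * (c - d) + (a - b) * d)"
    by (simp add: algebra_simps)
  also have "\<dots> \<le> max (N b * N (c - d)) (N (a - b) * N d)"
    using N_add_le_max[of "a * (c - d)" "(a - b) * d"] by (simp add: N_mult rel_closeD(1)[OF ab e])
  also have "\<dots> < e * (N b * N d)"
    using lt by simp
  finally show ?thesis
    unfolding rel_close_def N_mult[of b d] .
qed

lemma rel_close_prod:
  assumes "finite S" "0 < e" "e \<le> 1" "\<forall>i\<in>S. rel_close e (f i) (g i)"
  shows "rel_close e (prod f S) (prod g S)"
  using assms(1,4)
proof (induction S rule: finite_induct)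
  case empty
  then show ?case
    using rel_close_refl assms(2) by simp
next
  case (insert x S)
  then show ?case
    using rel_close_mult[OF _ _ assms(3)] by simp
qed

lemma rel_close_inverse:
  assumes ab: "rel_close e a b" and e: "e \<le> 1"
  shows "rel_close e (inverse a) (inverse b)"
proof -
  have "a \<noteq> 0" "b \<noteq> 0" "N a = N b"
    using rel_closeD[OF ab e] by auto
  then have "N (inverse a - inverse b) = N (a - b) * (inverse (N b) * inverse (N b))"
    by (simp add: inverse_diff_inverse N_minus N_mult N_inverse mult_ac)
  also have "\<dots> < e * N b * (inverse (N b) * inverse (N b))"
    using ab N_pos[OF \<open>b \<noteq> 0\<close>] unfolding rel_close_def by (simp add: mult_strict_right_mono)
  also have "\<dots> = e * N (inverse b)"
    using N_pos[OF \<open>b \<noteq> 0\<close>] by (simp add: N_inverse)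
  finally show ?thesis
    unfolding rel_close_def .
qed

lemma eq_if_rel_close:
  assumes "b \<noteq> 0" and close: "\<And>e. 0 < e \<Longrightarrow> e \<le> 1 \<Longrightarrow> rel_close e a b"
  shows "a = b"
proof (rule ccontr)
  assume "a \<noteq> b"
  then have pos: "0 < N (a - b)"
    using N_pos by simp
  define e where "e = min 1 (N (a - b) / (N b + 1))"
  have e: "0 < e" "e \<le> 1"
    using pos N_nonneg[of b] unfolding e_def by auto
  have "e * N b \<le> N (a - b) / (N b + 1) * N b"
    unfolding e_def using N_nonneg[of b] by (intro mult_right_mono) auto
  also have "\<dots> \<le> N (a - b)"
    using pos N_nonneg[of b] by (simp add: field_simps)
  finally show False
    using close[OF e] unfolding rel_close_def by simp
qed

lemma rel_cauchy_prod:
  assumes nz: "\<And>i. t i \<noteq> 0" and t: "rel_tendsto t 1"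
  shows "rel_cauchy (\<lambda>K. \<Prod>i<K. t i)"
  unfolding rel_cauchy_def
proof (intro allI impI)
  fix e :: real
  assume e: "0 < e" "e \<le> 1"
  obtain M where M: "\<forall>i\<ge>M. rel_close e (t i) 1"
    using t e unfolding rel_tendsto_def eventually_sequentially by blast
  have ordered: "rel_close e (\<Prod>i<b. t i) (\<Prod>i<a. t i)" if "M \<le> a" "a \<le> b" for a b
  proof -
    have prod_split: "(\<Prod>i<b. t i) = (\<Prod>i<a. t i) * prod t {a..<b}"
      using prod.atLeastLessThan_concat[of 0 a b t] that by (simp add: lessThan_atLeast0)
    have "rel_close e (prod t {a..<b}) (prod (\<lambda>_. 1) {a..<b})"
      using M that e by (intro rel_close_prod) auto
    then have tail: "rel_close e (prod t {a..<b}) 1"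
      by simp
    have "(\<Prod>i<a. t i) \<noteq> 0"
      using nz by simp
    then have "rel_close e ((\<Prod>i<a. t i) * prod t {a..<b}) ((\<Prod>i<a. t i) * 1)"
      using rel_close_mult[OF rel_close_refl[OF e(1)] tail e(2)] by blast
    then show ?thesis
      by (simp add: prod_split)
  qed
  have "rel_close e (\<Prod>i<a. t i) (\<Prod>i<b. t i)" if "M \<le> a" "M \<le> b" for a b
  proof (cases "a \<le> b")
    case True
    then show ?thesis
      using ordered[of a b] rel_close_sym e(2) that by blast
  qed (use ordered[of b a] that in simp)
  then show "\<exists>M. \<forall>a\<ge>M. \<forall>b\<ge>M. rel_close e (\<Prod>i<a. t i) (\<Prod>i<b. t i)"
    by blast
qed

end

locale complete_nonarch_field = nonarch_field +
  assumes complete: "abs_complete N"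
begin

lemma rel_cauchy_has_limit:
  assumes X: "rel_cauchy X"
  shows "\<exists>L. L \<noteq> 0 \<and> rel_tendsto X L"
proof -
  obtain M1 where M1: "\<forall>a\<ge>M1. \<forall>b\<ge>M1. rel_close (1/2) (X a) (X b)"
    using X unfolding rel_cauchy_def by force
  define c where "c = N (X M1)"
  have c: "0 < c"
    unfolding c_def using M1 rel_closeD(2) N_pos by force
  have Nc: "N (X a) = c" if "M1 \<le> a" for a
    unfolding c_def using M1 that rel_closeD(1) by force
  have "\<exists>M. \<forall>a\<ge>M. \<forall>b\<ge>M. N (X a - X b) < e" if e: "0 < e" for e
  proof -
    define \<epsilon> where "\<epsilon> = min 1 (e / c)"
    have \<epsilon>: "0 < \<epsilon>" "\<epsilon> \<le> 1" "\<epsilon> * c \<le> e"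
      using e c unfolding \<epsilon>_def by (auto simp: min_def field_simps)
    then obtain M2 where "\<forall>a\<ge>M2. \<forall>b\<ge>M2. rel_close \<epsilon> (X a) (X b)"
      using X unfolding rel_cauchy_def by blast
    then have "\<forall>a\<ge>max M1 M2. \<forall>b\<ge>max M1 M2. N (X a - X b) < e"
      using Nc \<epsilon>(3) unfolding rel_close_def by fastforce
    then show ?thesis ..
  qed
  then obtain L where L: "\<forall>e>0. \<exists>M. \<forall>a\<ge>M. N (X a - L) < e"
    using complete unfolding abs_complete_def by blast
  have NL: "N L = c"
  proof -
    obtain M where "\<forall>a\<ge>M. N (X a - L) < c"
      using L c by blast
    then have "N (L - X (max M M1)) < N (X (max M M1))"
      using Nc N_diff_commute by simp
    then have "N L = N (X (max M M1))"
      by (rule N_eq_if_close)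
    then show ?thesis
      using Nc by simp
  qed
  have "rel_tendsto X L"
    unfolding rel_tendsto_def eventually_sequentially
  proof (intro allI impI)
    fix e :: real
    assume "0 < e"
    then obtain M where "\<forall>a\<ge>M. N (X a - L) < e * c"
      using L mult_pos_pos[OF _ c] by blast
    then show "\<exists>M. \<forall>a\<ge>M. rel_close e (X a) L"
      unfolding rel_close_def NL by blast
  qed
  moreover have "L \<noteq> 0"
    using NL c by auto
  ultimately show ?thesis
    by blast
qed

end

definition zero_pt :: "'f::zero pt" where
  "zero_pt = (\<lambda>t i. 0, \<lambda>t i. 0)"

(* shift_pt n x is pi^n x, componentwise *)
definition shift_pt :: "nat \<Rightarrow> 'f::zero pt \<Rightarrow> 'f pt" where
  "shift_pt n x = (\<lambda>t i. if i < n then 0 else fst x t (i - n),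
                   \<lambda>t i. if i < n then 0 else snd x t (i - n))"

definition trunc_pt :: "nat \<Rightarrow> 'f::zero pt \<Rightarrow> 'f pt" where
  "trunc_pt n x = (\<lambda>t i. if i < n then fst x t i else 0, \<lambda>t i. if i < n then snd x t i else 0)"

definition periodic_ext :: "nat \<Rightarrow> 'f pt \<Rightarrow> 'f pt" where
  "periodic_ext P x = (\<lambda>t i. fst x t (i mod P), \<lambda>t i. snd x t (i mod P))"

lemma mem_Obar_iff: "x \<in> Obar m l piZ piA \<longleftrightarrow>
      (\<forall>t i. t < m \<longrightarrow> 0 \<le> fst x t i \<and> fst x t i < piZ t) \<and>
      (\<forall>t i. m \<le> t \<longrightarrow> fst x t i = 0) \<and>
      (\<forall>t i. t < l \<longrightarrow> degree (snd x t i) < degree (piA t)) \<and>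
      (\<forall>t i. l \<le> t \<longrightarrow> snd x t i = 0)"
  by (cases x) (simp add: Obar_def)

lemma funpow_phi: "(phi ^^ j) x = (\<lambda>t i. fst x t (i + j), \<lambda>t i. snd x t (i + j))"
  by (induction j) (auto simp: phi_def)

lemma phi_zero_pt: "phi zero_pt = zero_pt"
  unfolding phi_def zero_pt_def by simp

lemma phi_trunc_pt: "phi (trunc_pt (Suc D) x) = trunc_pt D (phi x)"
  unfolding phi_def trunc_pt_def by (auto simp: fun_eq_iff)

lemma trunc_pt_idem: "trunc_pt n (trunc_pt n x) = trunc_pt n x"
  unfolding trunc_pt_def by (auto simp: fun_eq_iff)

lemma funpow_phi_shift_pt: "j \<le> K \<Longrightarrow> (phi ^^ j) (shift_pt K x) = shift_pt (K - j) x"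
  unfolding funpow_phi shift_pt_def by (auto simp: fun_eq_iff)

lemma funpow_phi_shift_pt_add: "(phi ^^ (K + r)) (shift_pt K x) = (phi ^^ r) x"
  unfolding funpow_phi shift_pt_def by (auto simp: fun_eq_iff)

lemma funpow_phi_periodic_ext: "0 < P \<Longrightarrow> (phi ^^ P) (periodic_ext P x) = periodic_ext P x"
  unfolding funpow_phi periodic_ext_def by (auto simp: fun_eq_iff)

lemma agree_mono: "agree D x y \<Longrightarrow> D' \<le> D \<Longrightarrow> agree D' x y"
  unfolding agree_def by auto

lemma agree_sym: "agree D x y \<Longrightarrow> agree D y x"
  unfolding agree_def by auto

lemma agree_trans: "agree D x y \<Longrightarrow> agree D y z \<Longrightarrow> agree D x z"
  unfolding agree_def by auto

lemma agree_shift_pt: "agree D x y \<Longrightarrow> agree (D + n) (shift_pt n x) (shift_pt n y)"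
  unfolding agree_def shift_pt_def by auto

lemma agree_zero_shift_pt: "agree n zero_pt (shift_pt n x)"
  unfolding agree_def shift_pt_def zero_pt_def by auto

lemma agree_trunc_pt: "agree D x (trunc_pt D x)"
  unfolding agree_def trunc_pt_def by auto

lemma agree_periodic_ext_shift_pt:
  assumes "trunc_pt D x = x" "j < K + D"
  shows "agree K ((phi ^^ j) (periodic_ext (K + D) (shift_pt K x))) ((phi ^^ j) (shift_pt K x))"
  unfolding agree_def
proof (intro allI impI)
  fix t i
  assume i: "i < K"
  have high_digits: "fst x t k = 0" "snd x t k = 0" if "D \<le> k" for k
    using that arg_cong[OF assms(1), of "\<lambda>x. fst x t k"] arg_cong[OF assms(1), of "\<lambda>x. snd x t k"]
    unfolding trunc_pt_def by auto
  show "fst ((phi ^^ j) (periodic_ext (K + D) (shift_pt K x))) t i = fst ((phi ^^ j) (shift_pt K x)) t i \<and>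
        snd ((phi ^^ j) (periodic_ext (K + D) (shift_pt K x))) t i = snd ((phi ^^ j) (shift_pt K x)) t i"
  proof (cases "i + j < K + D")
    case False
    then have "(i + j) mod (K + D) = i + j - (K + D)"
      using assms(2) i by (simp add: le_mod_geq)
    then show ?thesis
      unfolding funpow_phi periodic_ext_def shift_pt_def using False i assms(2) high_digits by auto
  qed (simp add: funpow_phi periodic_ext_def)
qed

lemma prod_orbit_shift_pt:
  "(\<Prod>j<K + D. f ((phi ^^ j) (shift_pt K x))) = (\<Prod>i<K. f (shift_pt (Suc i) x)) * (\<Prod>r<D. f ((phi ^^ r) x))"
proof -
  have "(\<Prod>j<K + D. f ((phi ^^ j) (shift_pt K x))) =
      (\<Prod>j<K. f ((phi ^^ j) (shift_pt K x))) * (\<Prod>r<D. f ((phi ^^ (K + r)) (shift_pt K x)))"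
    by (induction D) (simp_all add: mult.assoc)
  moreover have "(\<Prod>j<K. f ((phi ^^ j) (shift_pt K x))) = (\<Prod>j<K. f (shift_pt (Suc (K - Suc j)) x))"
    by (rule prod.cong) (auto simp: funpow_phi_shift_pt Suc_diff_Suc)
  ultimately show ?thesis
    using prod.nat_diff_reindex[of "\<lambda>i. f (shift_pt (Suc i) x)" K]
    by (simp add: funpow_phi_shift_pt_add)
qed

lemma digit_sum_bounds:
  fixes p :: int
  assumes "\<forall>i. 0 \<le> d i \<and> d i < p"
  shows "0 \<le> (\<Sum>i<n. d i * p ^ i) \<and> (\<Sum>i<n. d i * p ^ i) \<le> p ^ n - 1"
proof (induction n)
  case (Suc n)
  have "0 < p"
    using assms by (meson le_less_trans)
  moreover have "d n \<le> p - 1"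
    using assms by force
  ultimately have "d n * p ^ n \<le> (p - 1) * p ^ n" "0 \<le> d n * p ^ n"
    using assms by (simp_all add: mult_right_mono)
  then show ?case
    using Suc by (simp add: algebra_simps)
qed simp

lemma abs_valZ_less_1:
  assumes p: "2 \<le> p" and d: "\<forall>i. 0 \<le> d i \<and> d i < p" and d0: "d 0 = 0" and n: "0 < n"
  shows "\<bar>valZ p n d\<bar> < 1"
proof -
  obtain n' where n': "n = Suc n'"
    using n by (cases n) auto
  define T where "T = (\<Sum>i<n'. d (Suc i) * p ^ i)"
  define S where "S = (\<Sum>i<n. d i * p ^ i)"
  have "S = p * T"
    unfolding S_def n' sum.lessThan_Suc_shift T_def using d0
    by (simp add: sum_distrib_left algebra_simps)
  moreover have "0 \<le> T" "T \<le> p ^ n' - 1"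
    using digit_sum_bounds[of "\<lambda>i. d (Suc i)" p n'] d unfolding T_def by auto
  moreover have "p * (p ^ n' - 1) = p ^ n - p"
    unfolding n' by (simp add: algebra_simps)
  ultimately have S: "0 \<le> S" "S < p ^ n - 1"
    using p mult_left_mono[of T "p ^ n' - 1" p] by auto
  have "(1::rat) \<le> of_int p ^ n"
    using p by (simp add: one_le_power)
  then have "\<bar>valZ p n d\<bar> = of_int S / of_int (p ^ n - 1)"
    unfolding valZ_def S_def[symmetric] using S by (simp add: abs_divide abs_of_nonpos)
  also have "\<dots> < 1"
  proof -
    have "(of_int S :: rat) < of_int (p ^ n - 1)"
      using S by (simp only: of_int_less_iff)
    then show ?thesis
      using S by simp
  qed
  finally show ?thesis .
qed

lemma card_UNIV_field_ge_2: "2 \<le> card (UNIV :: 'f::{finite,field} set)"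
  using card_mono[of "UNIV :: 'f set" "{0, 1}"] by simp

lemma absA_less_1:
  fixes p :: "'f::{finite,field} poly"
  assumes p: "0 < degree p" and d: "\<forall>i. degree (d i) < degree p" and n: "0 < n"
  shows "absA p n d < 1"
proof -
  define S where "S = (\<Sum>i<n. d i * p ^ i)"
  have "degree S < n * degree p"
    unfolding S_def
  proof (rule degree_sum_less)
    fix i
    assume "i \<in> {..<n}"
    have "degree (d i * p ^ i) \<le> degree (d i) + degree p * i"
      using degree_mult_le[of "d i" "p ^ i"] degree_power_le[of p i] by linarith
    also have "\<dots> < Suc i * degree p"
      using d by simp
    also have "\<dots> \<le> n * degree p"
      using \<open>i \<in> {..<n}\<close> by (intro mult_right_mono) auto
    finally show "degree (d i * p ^ i) < n * degree p" .
  qed (use n p in simp)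
  moreover have "degree (1 - p ^ n) = n * degree p"
  proof -
    have "p \<noteq> 0"
      using p by auto
    then have "degree (- (p ^ n)) = n * degree p"
      by (simp add: degree_power_eq)
    moreover have "degree (1 - p ^ n) = degree (- (p ^ n))"
      using degree_add_eq_left[of 1 "- (p ^ n)"] n p calculation by simp
    ultimately show ?thesis
      by simp
  qed
  ultimately have "degree S < degree (1 - p ^ n)"
    by simp
  then have "real (degree S) - real (degree (1 - p ^ n)) < 0"
    by simp
  moreover have "1 < real (card (UNIV :: 'f set))"
    using card_UNIV_field_ge_2[where 'f='f] by linarith
  ultimately show ?thesis
    unfolding absA_def abs_inf_def S_def[symmetric] by (simp add: powr_less_one)
qed

lemma phi_in_Obar: "x \<in> Obar m l piZ piA \<Longrightarrow> phi x \<in> Obar m l piZ piA"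
  by (auto simp: mem_Obar_iff phi_def)

lemma funpow_phi_in_Obar: "x \<in> Obar m l piZ piA \<Longrightarrow> (phi ^^ j) x \<in> Obar m l piZ piA"
  by (auto simp: mem_Obar_iff funpow_phi)

lemma periodic_ext_in_Obar: "x \<in> Obar m l piZ piA \<Longrightarrow> periodic_ext P x \<in> Obar m l piZ piA"
  by (auto simp: mem_Obar_iff periodic_ext_def)

lemma prime_power_ge_2:
  assumes "prime (p::nat)" "1 \<le> e"
  shows "2 \<le> int p ^ e"
proof -
  have "2 \<le> int p"
    using prime_ge_2_nat[OF assms(1)] by simp
  moreover have "int p \<le> int p ^ e"
    by (rule self_le_power) (use \<open>2 \<le> int p\<close> assms(2) in auto)
  ultimately show ?thesis
    by linarith
qed

lemma degree_irreducible_power_pos: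
  fixes v :: "'f::field poly"
  assumes "irreducible v" "1 \<le> e"
  shows "0 < degree (v ^ e)"
proof -
  have "v \<noteq> 0"
    using assms(1) by auto
  moreover have "degree v \<noteq> 0"
    using irreducible_not_unit[OF assms(1)] is_unit_iff_degree[OF \<open>v \<noteq> 0\<close>] by simp
  ultimately show ?thesis
    using assms(2) by (simp add: degree_power_eq)
qed

locale livsic = complete_nonarch_field N for N :: "'k::field \<Rightarrow> real" +
  fixes m l :: nat and piZ :: "nat \<Rightarrow> int" and piA :: "nat \<Rightarrow> 'f::{finite,field} poly"
    and F :: "'f pt \<Rightarrow> 'k"
  assumes piZ_ge_2: "\<forall>t<m. 2 \<le> piZ t"
    and piA_degree_pos: "\<forall>t<l. 0 < degree (piA t)"
    and F_cont: "cont_Obar m l piZ piA N F"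
    and F_nonzero: "\<forall>x\<in>Obar m l piZ piA. F x \<noteq> 0"
    and periodic: "\<forall>n::nat. \<forall>x\<in>Obar m l piZ piA.
        (\<forall>t<m. \<bar>valZ (piZ t) n (fst x t)\<bar> < 1) \<longrightarrow>
        (\<forall>t<l. absA (piA t) n (snd x t) < 1) \<longrightarrow>
        (phi ^^ n) x = x \<longrightarrow> (\<Prod>j<n. F ((phi ^^ j) x)) = 1"
begin

abbreviation Ob :: "'f pt set" where
  "Ob \<equiv> Obar m l piZ piA"

lemma zero_pt_in_Obar: "zero_pt \<in> Ob"
  using piZ_ge_2 piA_degree_pos by (auto simp: mem_Obar_iff zero_pt_def)

lemma shift_pt_in_Obar: "x \<in> Ob \<Longrightarrow> shift_pt n x \<in> Ob"
  using piZ_ge_2 piA_degree_pos by (auto simp: mem_Obar_iff shift_pt_def)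

lemma trunc_pt_in_Obar: "x \<in> Ob \<Longrightarrow> trunc_pt n x \<in> Ob"
  using piZ_ge_2 piA_degree_pos by (auto simp: mem_Obar_iff trunc_pt_def)

lemma periodic_orbit_prod_eq_1:
  assumes w: "w \<in> Ob" and P: "0 < P" "(phi ^^ P) w = w" and digit0: "\<forall>t<m. fst w t 0 = 0"
  shows "(\<Prod>j<P. F ((phi ^^ j) w)) = 1"
proof -
  have "\<forall>t<m. \<bar>valZ (piZ t) P (fst w t)\<bar> < 1"
    using piZ_ge_2 w digit0 P(1) by (intro allI impI abs_valZ_less_1) (auto simp: mem_Obar_iff)
  moreover have "\<forall>t<l. absA (piA t) P (snd w t) < 1"
    using piA_degree_pos w P(1) by (intro allI impI absA_less_1) (auto simp: mem_Obar_iff)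
  ultimately show ?thesis
    using periodic w P(2) by blast
qed

lemma F_zero_pt: "F zero_pt = 1"
  using periodic_orbit_prod_eq_1[OF zero_pt_in_Obar, of 1] phi_zero_pt
  by (simp add: zero_pt_def)

lemma F_rel_cont:
  assumes "x \<in> Ob" "0 < e"
  shows "eventually (\<lambda>D. \<forall>y\<in>Ob. agree D x y \<longrightarrow> rel_close e (F y) (F x)) sequentially"
proof -
  have "0 < e * N (F x)"
    using assms F_nonzero N_pos by simp
  then obtain D where "\<forall>y\<in>Ob. agree D x y \<longrightarrow> N (F y - F x) < e * N (F x)"
    using F_cont assms(1) unfolding cont_Obar_def by blast
  then show ?thesis
    unfolding eventually_sequentially rel_close_def using agree_mono by blast
qed

lemma F_close_1_near_zero:
  assumes "0 < e"
  obtains D where "\<forall>y\<in>Ob. agree D zero_pt y \<longrightarrow> rel_close e (F y) 1"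
  using F_rel_cont[OF zero_pt_in_Obar assms] F_zero_pt by (auto simp: eventually_sequentially)

(* Continuity is needed at infinitely many points pi^i x, but near 0 it reduces to
   continuity at 0, so finitely many points suffice. *)
lemma F_rel_cont_shifts:
  assumes x: "x \<in> Ob" and e: "0 < e" "e \<le> 1"
  shows "eventually (\<lambda>D. \<forall>i. \<forall>y\<in>Ob. agree D (shift_pt i x) y \<longrightarrow>
           rel_close e (F y) (F (shift_pt i x))) sequentially"
proof -
  obtain D0 where D0: "\<forall>y\<in>Ob. agree D0 zero_pt y \<longrightarrow> rel_close e (F y) 1"
    using F_close_1_near_zero[OF e(1)] by blast
  have "eventually (\<lambda>D. \<forall>i\<in>{..<D0}. \<forall>y\<in>Ob. agree D (shift_pt i x) y \<longrightarrow>
      rel_close e (F y) (F (shift_pt i x))) sequentially"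
    by (rule eventually_ball_finite) (use F_rel_cont[OF shift_pt_in_Obar[OF x] e(1)] in auto)
  moreover have "eventually (\<lambda>D. D0 \<le> D) sequentially"
    by (rule eventually_ge_at_top)
  ultimately show ?thesis
  proof eventually_elim
    case (elim D)
    show ?case
    proof (intro allI ballI impI)
      fix i y
      assume y: "y \<in> Ob" and ag: "agree D (shift_pt i x) y"
      show "rel_close e (F y) (F (shift_pt i x))"
      proof (cases "i < D0")
        case False
        then have "agree D0 zero_pt (shift_pt i x)"
          using agree_mono[OF agree_zero_shift_pt, of D0 i x] by simp
        moreover from this have "agree D0 zero_pt y"
          using agree_trans agree_mono[OF ag elim(2)] by blast
        ultimately have "rel_close e (F y) 1" "rel_close e (F (shift_pt i x)) 1"
          using D0 y shift_pt_in_Obar[OF x] by blast+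
        then show ?thesis
          using rel_close_trans[OF _ rel_close_sym e(2)] e(2) by blast
      qed (use elim(1) y ag in blast)
    qed
  qed
qed

definition shift_prod :: "nat \<Rightarrow> 'f pt \<Rightarrow> 'k" where
  "shift_prod K x = (\<Prod>i<K. F (shift_pt (Suc i) x))"

definition inf_shift_prod :: "'f pt \<Rightarrow> 'k" where
  "inf_shift_prod x = (SOME L. L \<noteq> 0 \<and> rel_tendsto (\<lambda>K. shift_prod K x) L)"

lemma inf_shift_prod:
  assumes x: "x \<in> Ob"
  shows "inf_shift_prod x \<noteq> 0" "rel_tendsto (\<lambda>K. shift_prod K x) (inf_shift_prod x)"
proof -
  have factors: "rel_tendsto (\<lambda>i. F (shift_pt (Suc i) x)) 1"
    unfolding rel_tendsto_def
  proof (intro allI impI)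
    fix e :: real
    assume "0 < e"
    then obtain D0 where D0: "\<forall>y\<in>Ob. agree D0 zero_pt y \<longrightarrow> rel_close e (F y) 1"
      by (rule F_close_1_near_zero)
    have "rel_close e (F (shift_pt (Suc i) x)) 1" if "D0 \<le> i" for i
      using D0 agree_mono[OF agree_zero_shift_pt le_SucI[OF that]] shift_pt_in_Obar[OF x] by blast
    then show "eventually (\<lambda>i. rel_close e (F (shift_pt (Suc i) x)) 1) sequentially"
      unfolding eventually_sequentially by blast
  qed
  have "rel_cauchy (\<lambda>K. shift_prod K x)"
    unfolding shift_prod_def
    by (rule rel_cauchy_prod[OF _ factors]) (use F_nonzero shift_pt_in_Obar[OF x] in blast)
  then have "\<exists>L. L \<noteq> 0 \<and> rel_tendsto (\<lambda>K. shift_prod K x) L"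
    by (rule rel_cauchy_has_limit)
  then have "inf_shift_prod x \<noteq> 0 \<and> rel_tendsto (\<lambda>K. shift_prod K x) (inf_shift_prod x)"
    unfolding inf_shift_prod_def by (rule someI_ex)
  then show "inf_shift_prod x \<noteq> 0" "rel_tendsto (\<lambda>K. shift_prod K x) (inf_shift_prod x)"
    by blast+
qed

lemma inf_shift_prod_rel_cont:
  assumes x: "x \<in> Ob" and e: "0 < e" "e \<le> 1"
  shows "eventually (\<lambda>D. \<forall>y\<in>Ob. agree D x y \<longrightarrow>
           rel_close e (inf_shift_prod y) (inf_shift_prod x)) sequentially"
  using F_rel_cont_shifts[OF x e]
proof eventually_elim
  case (elim D)
  show ?case
  proof (intro ballI impI)
    fix y
    assume y: "y \<in> Ob" and ag: "agree D x y"
    have partial: "rel_close e (shift_prod K y) (shift_prod K x)" for K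
      unfolding shift_prod_def
    proof (rule rel_close_prod[OF finite_lessThan e], intro ballI)
      fix i
      have "agree D (shift_pt (Suc i) x) (shift_pt (Suc i) y)"
        using agree_mono[OF agree_shift_pt[OF ag]] by simp
      then show "rel_close e (F (shift_pt (Suc i) y)) (F (shift_pt (Suc i) x))"
        using elim shift_pt_in_Obar[OF y] by blast
    qed
    have "eventually (\<lambda>K. rel_close e (shift_prod K x) (inf_shift_prod x) \<and>
        rel_close e (shift_prod K y) (inf_shift_prod y)) sequentially"
      using inf_shift_prod(2)[OF x] inf_shift_prod(2)[OF y] e
      unfolding rel_tendsto_def by (intro eventually_conj) auto
    then obtain K where x_lim: "rel_close e (shift_prod K x) (inf_shift_prod x)"
        and y_lim: "rel_close e (shift_prod K y) (inf_shift_prod y)"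
      by (auto simp: eventually_sequentially)
    show "rel_close e (inf_shift_prod y) (inf_shift_prod x)"
      using rel_close_trans[OF rel_close_trans[OF rel_close_sym[OF y_lim e(2)] partial e(2)] x_lim e(2)] .
  qed
qed

lemma periodic_ext_shift_orbit_prod_eq_1:
  assumes x: "x \<in> Ob" and K: "1 \<le> K"
  shows "(\<Prod>j<K + D. F ((phi ^^ j) (periodic_ext (K + D) (shift_pt K x)))) = 1"
proof (rule periodic_orbit_prod_eq_1)
  show "periodic_ext (K + D) (shift_pt K x) \<in> Ob"
    by (intro periodic_ext_in_Obar shift_pt_in_Obar x)
  show "0 < K + D"
    "(phi ^^ (K + D)) (periodic_ext (K + D) (shift_pt K x)) = periodic_ext (K + D) (shift_pt K x)"
    using K by (simp_all add: funpow_phi_periodic_ext)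
  show "\<forall>t<m. fst (periodic_ext (K + D) (shift_pt K x)) t 0 = 0"
    using K by (simp add: periodic_ext_def shift_pt_def)
qed

lemma shift_prod_mult_orbit_prod_close_1:
  assumes x: "x \<in> Ob" and trunc: "trunc_pt D x = x" and e: "0 < e" "e \<le> 1"
  shows "eventually (\<lambda>K. rel_close e 1 (shift_prod K x * (\<Prod>r<D. F ((phi ^^ r) x)))) sequentially"
proof -
  have "eventually (\<lambda>K. \<forall>r\<in>{..<D}. \<forall>y\<in>Ob. agree K ((phi ^^ r) x) y \<longrightarrow>
      rel_close e (F y) (F ((phi ^^ r) x))) sequentially"
    by (rule eventually_ball_finite) (use F_rel_cont[OF funpow_phi_in_Obar[OF x] e(1)] in auto)
  moreover note F_rel_cont_shifts[OF x e]
  moreover have "eventually (\<lambda>K. 1 \<le> K) sequentially"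
    by (rule eventually_ge_at_top)
  ultimately show ?thesis
  proof eventually_elim
    case (elim K)
    define y where "y = shift_pt K x"
    (* the orbit of w shadows pi^K x, ..., pi x, x, phi x, ..., phi^(D-1) x *)
    define w where "w = periodic_ext (K + D) y"
    have w: "w \<in> Ob"
      unfolding w_def y_def by (intro periodic_ext_in_Obar shift_pt_in_Obar x)
    have "(\<Prod>j<K + D. F ((phi ^^ j) w)) = 1"
      unfolding w_def y_def using periodic_ext_shift_orbit_prod_eq_1[OF x elim(3)] .
    moreover have "rel_close e (\<Prod>j<K + D. F ((phi ^^ j) w)) (\<Prod>j<K + D. F ((phi ^^ j) y))"
    proof (rule rel_close_prod[OF finite_lessThan e], intro ballI)
      fix j
      assume j: "j \<in> {..<K + D}"
      then have ag: "agree K ((phi ^^ j) y) ((phi ^^ j) w)"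
        unfolding w_def y_def using agree_periodic_ext_shift_pt[OF trunc] agree_sym by blast
      show "rel_close e (F ((phi ^^ j) w)) (F ((phi ^^ j) y))"
      proof (cases "j < K")
        case True
        then have "(phi ^^ j) y = shift_pt (K - j) x"
          unfolding y_def by (simp add: funpow_phi_shift_pt)
        then show ?thesis
          using elim(2) ag funpow_phi_in_Obar[OF w] by simp
      next
        case False
        then have "(phi ^^ j) y = (phi ^^ (j - K)) x" "j - K < D"
          using funpow_phi_shift_pt_add[of K "j - K" x] j unfolding y_def by auto
        then show ?thesis
          using elim(1) ag funpow_phi_in_Obar[OF w] by simp
      qed
    qed
    ultimately show ?case
      unfolding y_def prod_orbit_shift_pt shift_prod_def by simp
  qed
qed

lemma inf_shift_prod_mult_orbit_prod:
  assumes x: "x \<in> Ob" and trunc: "trunc_pt D x = x"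
  shows "inf_shift_prod x * (\<Prod>r<D. F ((phi ^^ r) x)) = 1"
proof -
  define Q where "Q = (\<Prod>r<D. F ((phi ^^ r) x))"
  have Q: "Q \<noteq> 0"
    unfolding Q_def using F_nonzero funpow_phi_in_Obar[OF x] by simp
  have "1 = inf_shift_prod x * Q"
  proof (rule eq_if_rel_close)
    show "inf_shift_prod x * Q \<noteq> 0"
      using inf_shift_prod(1)[OF x] Q by simp
    fix e :: real
    assume e: "0 < e" "e \<le> 1"
    have "eventually (\<lambda>K. rel_close e 1 (shift_prod K x * Q) \<and>
        rel_close e (shift_prod K x) (inf_shift_prod x)) sequentially"
      using shift_prod_mult_orbit_prod_close_1[OF x trunc e] inf_shift_prod(2)[OF x] e
      unfolding Q_def rel_tendsto_def by (intro eventually_conj) auto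
    then obtain K where approx: "rel_close e 1 (shift_prod K x * Q)"
        and lim: "rel_close e (shift_prod K x) (inf_shift_prod x)"
      by (auto simp: eventually_sequentially)
    show "rel_close e 1 (inf_shift_prod x * Q)"
      using rel_close_trans[OF approx rel_close_mult[OF lim rel_close_refl[OF e(1) Q] e(2)] e(2)] .
  qed
  then show ?thesis
    unfolding Q_def by simp
qed

lemma F_mult_inf_shift_prod_trunc:
  assumes x: "x \<in> Ob" and trunc: "trunc_pt (Suc D) x = x"
  shows "F x * inf_shift_prod x = inf_shift_prod (phi x)"
proof -
  define Q where "Q = (\<Prod>r<D. F ((phi ^^ r) (phi x)))"
  have "Q \<noteq> 0"
    unfolding Q_def using F_nonzero funpow_phi_in_Obar[OF phi_in_Obar[OF x]] by simp
  have "(\<Prod>r<Suc D. F ((phi ^^ r) x)) = F x * Q"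
    unfolding prod.lessThan_Suc_shift Q_def by (simp add: funpow_Suc_right del: funpow.simps)
  then have "(F x * inf_shift_prod x) * Q = 1"
    using inf_shift_prod_mult_orbit_prod[OF x trunc] by (simp add: ac_simps)
  moreover have "inf_shift_prod (phi x) * Q = 1"
    using inf_shift_prod_mult_orbit_prod[OF phi_in_Obar[OF x], of D] phi_trunc_pt[of D x] trunc
    unfolding Q_def by simp
  ultimately show ?thesis
    using \<open>Q \<noteq> 0\<close> by (metis mult_right_cancel)
qed

lemma F_mult_inf_shift_prod:
  assumes x: "x \<in> Ob"
  shows "F x * inf_shift_prod x = inf_shift_prod (phi x)"
proof (rule eq_if_rel_close)
  show "inf_shift_prod (phi x) \<noteq> 0"
    using inf_shift_prod(1)[OF phi_in_Obar[OF x]] .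
  fix e :: real
  assume e: "0 < e" "e \<le> 1"
  have "eventually (\<lambda>D. (\<forall>y\<in>Ob. agree D x y \<longrightarrow> rel_close e (inf_shift_prod y) (inf_shift_prod x)) \<and>
      (\<forall>y\<in>Ob. agree D (phi x) y \<longrightarrow> rel_close e (inf_shift_prod y) (inf_shift_prod (phi x))) \<and>
      (\<forall>y\<in>Ob. agree D x y \<longrightarrow> rel_close e (F y) (F x))) sequentially"
    using inf_shift_prod_rel_cont[OF x e] inf_shift_prod_rel_cont[OF phi_in_Obar[OF x] e]
      F_rel_cont[OF x e(1)] by (intro eventually_conj)
  then obtain D where
    H_near_x: "\<forall>y\<in>Ob. agree D x y \<longrightarrow> rel_close e (inf_shift_prod y) (inf_shift_prod x)" and
    H_near_phi_x: "\<forall>y\<in>Ob. agree D (phi x) y \<longrightarrow> rel_close e (inf_shift_prod y) (inf_shift_prod (phi x))" and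
    F_near_x: "\<forall>y\<in>Ob. agree D x y \<longrightarrow> rel_close e (F y) (F x)"
    by (auto simp: eventually_sequentially)
  define z where "z = trunc_pt (Suc D) x"
  have z: "z \<in> Ob" "agree D x z"
    unfolding z_def using trunc_pt_in_Obar[OF x] agree_mono[OF agree_trunc_pt[of "Suc D" x], of D] by auto
  have "agree D (phi x) (phi z)"
    unfolding z_def phi_trunc_pt by (rule agree_trunc_pt)
  then have "rel_close e (inf_shift_prod (phi z)) (inf_shift_prod (phi x))"
    using H_near_phi_x phi_in_Obar[OF z(1)] by blast
  moreover have "rel_close e (F x * inf_shift_prod x) (F z * inf_shift_prod z)"
  proof -
    have "rel_close e (F z) (F x)" "rel_close e (inf_shift_prod z) (inf_shift_prod x)"
      using F_near_x H_near_x z by blast+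
    then show ?thesis
      using rel_close_mult rel_close_sym e(2) by blast
  qed
  moreover have "F z * inf_shift_prod z = inf_shift_prod (phi z)"
    using F_mult_inf_shift_prod_trunc[OF z(1), of D] by (simp add: z_def trunc_pt_idem)
  ultimately show "rel_close e (F x * inf_shift_prod x) (inf_shift_prod (phi x))"
    using rel_close_trans[OF _ _ e(2)] by simp
qed

lemma coboundary:
  "\<exists>G :: 'f pt \<Rightarrow> 'k. cont_Obar m l piZ piA N G \<and> (\<forall>x\<in>Ob. G x \<noteq> 0) \<and>
     (\<forall>x\<in>Ob. F x = G x / G (phi x))"
proof (intro exI conjI ballI)
  define G where "G x = inverse (inf_shift_prod x)" for x
  show "cont_Obar m l piZ piA N G"
    unfolding cont_Obar_def
  proof (intro ballI allI impI)
    fix x and e :: real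
    assume x: "x \<in> Ob" and e: "0 < e"
    have "0 < N (G x)"
      unfolding G_def using inf_shift_prod(1)[OF x] N_pos by simp
    define \<epsilon> where "\<epsilon> = min 1 (e / N (G x))"
    have \<epsilon>: "0 < \<epsilon>" "\<epsilon> \<le> 1" "\<epsilon> * N (G x) \<le> e"
      using e \<open>0 < N (G x)\<close> unfolding \<epsilon>_def by (auto simp: min_def field_simps)
    obtain D where "\<forall>y\<in>Ob. agree D x y \<longrightarrow> rel_close \<epsilon> (inf_shift_prod y) (inf_shift_prod x)"
      using inf_shift_prod_rel_cont[OF x \<epsilon>(1,2)] by (auto simp: eventually_sequentially)
    then have "\<forall>y\<in>Ob. agree D x y \<longrightarrow> rel_close \<epsilon> (G y) (G x)"
      unfolding G_def using rel_close_inverse \<epsilon>(2) by blast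
    then have "\<forall>y\<in>Ob. agree D x y \<longrightarrow> N (G y - G x) < e"
      using \<epsilon>(3) unfolding rel_close_def by fastforce
    then show "\<exists>D. \<forall>y\<in>Ob. agree D x y \<longrightarrow> N (G y - G x) < e" ..
  qed
  fix x
  assume x: "x \<in> Ob"
  show "G x \<noteq> 0"
    unfolding G_def using inf_shift_prod(1)[OF x] by simp
  show "F x = G x / G (phi x)"
    unfolding G_def using F_mult_inf_shift_prod[OF x] inf_shift_prod(1)[OF x] by (simp add: field_simps)
qed

end

theorem mainTheorem4:
  fixes m l :: nat
    and piZ :: "nat \<Rightarrow> int"
    and piA :: "nat \<Rightarrow> 'f::{finite,field} poly"
    and N :: "'k::field \<Rightarrow> real"
    and F :: "'f pt \<Rightarrow> 'k"
  assumes piZ: "\<forall>t<m. \<exists>(p::nat) e. prime p \<and> 1 \<le> e \<and> piZ t = int p ^ e"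
    and piA: "\<forall>t<l. \<exists>v e. lead_coeff v = 1 \<and> irreducible v \<and> 1 \<le> e \<and> piA t = v ^ e"
    and K: "nonarch_abs N" "abs_complete N"
    and Fcont: "cont_Obar m l piZ piA N F"
    and Fnz: "\<forall>x\<in>Obar m l piZ piA. F x \<noteq> 0"
    and periodic: "\<forall>n::nat. \<forall>x\<in>Obar m l piZ piA.
        (\<forall>t<m. \<bar>valZ (piZ t) n (fst x t)\<bar> < 1) \<longrightarrow>
        (\<forall>t<l. absA (piA t) n (snd x t) < 1) \<longrightarrow>
        (phi ^^ n) x = x \<longrightarrow> (\<Prod>j<n. F ((phi ^^ j) x)) = 1"
  shows "\<exists>G :: 'f pt \<Rightarrow> 'k. cont_Obar m l piZ piA N G \<and>
           (\<forall>x\<in>Obar m l piZ piA. G x \<noteq> 0) \<and>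
           (\<forall>x\<in>Obar m l piZ piA. F x = G x / G (phi x))"
proof -
  have "2 \<le> piZ t" if "t < m" for t
  proof -
    obtain p e where "prime p" "1 \<le> e" "piZ t = int p ^ e"
      using piZ \<open>t < m\<close> by blast
    then show ?thesis
      by (simp add: prime_power_ge_2)
  qed
  moreover have "0 < degree (piA t)" if "t < l" for t
  proof -
    obtain v e where "irreducible v" "1 \<le> e" "piA t = v ^ e"
      using piA \<open>t < l\<close> by blast
    then show ?thesis
      by (simp add: degree_irreducible_power_pos)
  qed
  ultimately interpret livsic N m l piZ piA F
    using K Fcont Fnz periodic by unfold_locales auto
  show ?thesis
    by (rule coboundary)
qed

end
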